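(* A linear dendron $T$ is reducible if and only if $T$ is a star $S_n$ whose number of states $n$ is a composite number.
   Context: A finite dynamical system (FDS) is a function $A:S_A\to S_A$ on a finite set, considered up to isomorphism of functional graphs (arcs $x\to A(x)$). The product $AB$ acts on $S_A\times S_B$ by $(a,b)\mapsto(A(a),B(b))$. An FDS $T$ is reducible if $T=AB$ for FDSs $A,B$ each having strictly fewer states than $T$. A dendron is an FDS with connected functional graph and a fixpoint. A predecessor of a state $s$ is a state $t$ with $A(t)=s$. A linear dendron is a dendron in which every state other than the fixpoint has at most one predecessor. The depth of a dendron is the maximum, over states $s$, of the least $m\ge 0$ such that the $m$-fold iterate of the map sends $s$ to the fixpoint. A star $S_n$ is a linear dendron of depth at most $1$ with $n$ states (a fixpoint together with $n-1$ states mapped directly to it). *)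

theory Defs
  imports "HOL-Computational_Algebra.Primes"
begin

text \<open>A finite dynamical system is represented by a finite state set S together
with a map f that sends S into S (values of f outside S are irrelevant).\<close>

definition fds :: "'a set \<Rightarrow> ('a \<Rightarrow> 'a) \<Rightarrow> bool" where
  "fds S f \<longleftrightarrow> finite S \<and> (\<forall>x\<in>S. f x \<in> S)"

definition fds_iso :: "'a set \<Rightarrow> ('a \<Rightarrow> 'a) \<Rightarrow> 'b set \<Rightarrow> ('b \<Rightarrow> 'b) \<Rightarrow> bool" where
  "fds_iso S f S' g \<longleftrightarrow> (\<exists>h. bij_betw h S S' \<and> (\<forall>x\<in>S. h (f x) = g (h x)))"

definition fds_prod_map :: "('a \<Rightarrow> 'a) \<Rightarrow> ('b \<Rightarrow> 'b) \<Rightarrow> ('a \<times> 'b \<Rightarrow> 'a \<times> 'b)" where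
  "fds_prod_map fA fB = (\<lambda>(a, b). (fA a, fB b))"

text \<open>Reducibility: T is isomorphic to a product AB of FDSs with strictly fewer states.
Every FDS is isomorphic to one on a subset of nat, so factors are taken on nat.\<close>
definition reducible :: "'a set \<Rightarrow> ('a \<Rightarrow> 'a) \<Rightarrow> bool" where
  "reducible S f \<longleftrightarrow>
     (\<exists>(SA :: nat set) fA (SB :: nat set) fB.
        fds SA fA \<and> fds SB fB \<and> card SA < card S \<and> card SB < card S \<and>
        fds_iso (SA \<times> SB) (fds_prod_map fA fB) S f)"

definition arcs :: "'a set \<Rightarrow> ('a \<Rightarrow> 'a) \<Rightarrow> ('a \<times> 'a) set" where
  "arcs S f = {(x, f x) | x. x \<in> S}"

definition fds_connected :: "'a set \<Rightarrow> ('a \<Rightarrow> 'a) \<Rightarrow> bool" where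
  "fds_connected S f \<longleftrightarrow> S \<noteq> {} \<and>
     (\<forall>x\<in>S. \<forall>y\<in>S. (x, y) \<in> (arcs S f \<union> (arcs S f)\<inverse>)\<^sup>*)"

definition dendron :: "'a set \<Rightarrow> ('a \<Rightarrow> 'a) \<Rightarrow> bool" where
  "dendron S f \<longleftrightarrow> fds S f \<and> fds_connected S f \<and> (\<exists>z\<in>S. f z = z)"

definition fixpt :: "'a set \<Rightarrow> ('a \<Rightarrow> 'a) \<Rightarrow> 'a" where
  "fixpt S f = (THE z. z \<in> S \<and> f z = z)"

definition linear_dendron :: "'a set \<Rightarrow> ('a \<Rightarrow> 'a) \<Rightarrow> bool" where
  "linear_dendron S f \<longleftrightarrow> dendron S f \<and>
     (\<forall>s\<in>S. f s \<noteq> s \<longrightarrow> card {t \<in> S. f t = s} \<le> 1)"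

definition depth :: "'a set \<Rightarrow> ('a \<Rightarrow> 'a) \<Rightarrow> nat" where
  "depth S f = Max ((\<lambda>s. LEAST m. (f ^^ m) s = fixpt S f) ` S)"

definition is_star :: "'a set \<Rightarrow> ('a \<Rightarrow> 'a) \<Rightarrow> bool" where
  "is_star S f \<longleftrightarrow> linear_dendron S f \<and> depth S f \<le> 1"

definition composite :: "nat \<Rightarrow> bool" where
  "composite n \<longleftrightarrow> n > 1 \<and> \<not> prime n"

end

(* An isomorphism T = A B transports the linear-dendron structure to the product, whose
   unique fixpoint is (a0, b0). If B has a state other than b0, then b0 has a predecessor
   b' other than itself; so if some a had an image a' = A a different from a0, the non-fixed
   state (a', b0) would have the two predecessors (a, b0) and (a, b'). Hence A, and by
   symmetry B, is constant, so T is a star, and |T| = |A| |B| with proper factors is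
   composite. Conversely a star on a b states is the product of the stars on a and on b
   states. *)

theory Submission
  imports Defs "HOL-Combinatorics.Transposition"
begin

lemma connected_reaches_fixpoint:
  assumes "fds_connected S f" and "z \<in> S" "f z = z" and "x \<in> S"
  shows "\<exists>m. (f ^^ m) x = z"
proof -
  have "(z, x) \<in> (arcs S f \<union> (arcs S f)\<inverse>)\<^sup>*"
    using assms unfolding fds_connected_def by blast
  then show ?thesis
  proof (induction rule: rtrancl_induct)
    case base
    show ?case by (rule exI[of _ 0]) simp
  next
    case (step y w)
    then obtain m where m: "(f ^^ m) y = z" by blast
    from step.hyps(2) consider "w = f y" | "y = f w"
      unfolding arcs_def by blast
    then show ?case
    proof cases
      case 1
      then have "(f ^^ m) w = z" using m \<open>f z = z\<close> by (metis funpow_swap1)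
      then show ?thesis by blast
    next
      case 2
      then have "(f ^^ Suc m) w = z" using m by (simp add: funpow_Suc_right del: funpow.simps)
      then show ?thesis by blast
    qed
  qed
qed

lemma dendron_fixpoint_unique:
  assumes "dendron S f" and "z \<in> S" "f z = z" and "w \<in> S" "f w = w"
  shows "w = z"
proof -
  have "fds_connected S f" using assms(1) unfolding dendron_def by blast
  then obtain m where "(f ^^ m) w = z"
    using connected_reaches_fixpoint assms(2-4) by meson
  moreover have "(f ^^ m) w = w" using \<open>f w = w\<close> by (induction m) simp_all
  ultimately show ?thesis by simp
qed

lemma fixpt_eqI:
  assumes "dendron S f" and "z \<in> S" "f z = z"
  shows "fixpt S f = z"
  unfolding fixpt_def
proof (rule the_equality)
  show "z \<in> S \<and> f z = z" using assms(2,3) ..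
  show "w = z" if "w \<in> S \<and> f w = w" for w
    using dendron_fixpoint_unique[OF assms] that by blast
qed

lemma dendron_depth_le_1_iff:
  assumes "dendron S f" and "z \<in> S" "f z = z"
  shows "depth S f \<le> 1 \<longleftrightarrow> (\<forall>s\<in>S. f s = z)"
proof -
  define dist where "dist s = (LEAST m. (f ^^ m) s = z)" for s
  have "finite S" "fds_connected S f" using assms(1) unfolding dendron_def fds_def by blast+
  have depth: "depth S f = Max (dist ` S)"
    unfolding depth_def dist_def fixpt_eqI[OF assms] ..
  have dist_le_1: "dist s \<le> 1 \<longleftrightarrow> f s = z" if s: "s \<in> S" for s
  proof
    obtain m where "(f ^^ m) s = z"
      using connected_reaches_fixpoint[OF \<open>fds_connected S f\<close> assms(2,3) s] by blast
    then have reach: "(f ^^ dist s) s = z" unfolding dist_def by (rule LeastI)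
    assume "dist s \<le> 1"
    then consider "dist s = 0" | "dist s = 1" by linarith
    then show "f s = z" using reach \<open>f z = z\<close> by cases auto
  next
    assume "f s = z"
    then show "dist s \<le> 1" unfolding dist_def by (intro Least_le) simp
  qed
  have "depth S f \<le> 1 \<longleftrightarrow> (\<forall>s\<in>S. dist s \<le> 1)"
    unfolding depth using \<open>finite S\<close> assms(2) by (subst Max_le_iff) auto
  also have "\<dots> \<longleftrightarrow> (\<forall>s\<in>S. f s = z)" using dist_le_1 by blast
  finally show ?thesis .
qed

lemma linear_dendron_is_star_iff:
  assumes "linear_dendron S f" and "z \<in> S" "f z = z"
  shows "is_star S f \<longleftrightarrow> (\<forall>s\<in>S. f s = z)"
proof -
  have "dendron S f" using assms(1) unfolding linear_dendron_def by blast
  from dendron_depth_le_1_iff[OF this assms(2,3)] show ?thesis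
    using assms(1) unfolding is_star_def by blast
qed

lemma linear_dendron_predecessor_unique:
  assumes "linear_dendron S f" and "s \<in> S" "f s \<noteq> s"
    and "t1 \<in> S" "f t1 = s" and "t2 \<in> S" "f t2 = s"
  shows "t1 = t2"
proof -
  have "finite S" using assms(1) unfolding linear_dendron_def dendron_def fds_def by blast
  moreover have "card {t \<in> S. f t = s} \<le> Suc 0"
    using assms(1-3) unfolding linear_dendron_def by simp
  ultimately show ?thesis
    using assms(4-) by (subst (asm) card_le_Suc0_iff_eq) auto
qed

lemma reachable_has_proper_predecessor:
  assumes "(g ^^ m) x = y" and "x \<noteq> y" and "x \<in> B" and "\<forall>b\<in>B. g b \<in> B"
  shows "\<exists>x'\<in>B. x' \<noteq> y \<and> g x' = y"
  using assms
proof (induction m arbitrary: x)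
  case 0
  then show ?case by simp
next
  case (Suc m)
  show ?case
  proof (cases "g x = y")
    case True
    then show ?thesis using Suc.prems by blast
  next
    case False
    have "(g ^^ m) (g x) = y" using Suc.prems(1) by (simp add: funpow_Suc_right del: funpow.simps)
    then show ?thesis using Suc False by blast
  qed
qed

lemma fds_iso_sym:
  assumes "fds_iso P F S f" and "fds P F"
  shows "fds_iso S f P F"
proof -
  obtain h where h: "bij_betw h P S" and conj: "\<forall>x\<in>P. h (F x) = f (h x)"
    using assms(1) unfolding fds_iso_def by blast
  define k where "k = inv_into P h"
  have k: "bij_betw k S P" unfolding k_def using h by (rule bij_betw_inv_into)
  have "k (f s) = F (k s)" if s: "s \<in> S" for s
  proof -
    have ks: "k s \<in> P" "h (k s) = s"
      using bij_betwE[OF k] bij_betw_inv_into_right[OF h s] s unfolding k_def by blast+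
    then have "F (k s) \<in> P" using assms(2) unfolding fds_def by blast
    moreover have "f s = h (F (k s))" using conj ks by simp
    ultimately show ?thesis unfolding k_def using bij_betw_inv_into_left[OF h] by simp
  qed
  with k show ?thesis unfolding fds_iso_def by blast
qed

lemma fds_iso_connected:
  assumes "fds_iso S f P F" and "fds_connected S f"
  shows "fds_connected P F"
proof -
  obtain h where h: "bij_betw h S P" and conj: "\<forall>x\<in>S. h (f x) = F (h x)"
    using assms(1) unfolding fds_iso_def by blast
  have h_arcs: "(h u, h v) \<in> arcs P F" if "(u, v) \<in> arcs S f" for u v
    using that conj bij_betwE[OF h] unfolding arcs_def by auto
  have h_steps: "(h u, h v) \<in> (arcs P F \<union> (arcs P F)\<inverse>)\<^sup>*"
    if "(u, v) \<in> (arcs S f \<union> (arcs S f)\<inverse>)\<^sup>*" for u v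
    using that
  proof (induction rule: rtrancl_induct)
    case (step v w)
    then have "(h v, h w) \<in> arcs P F \<union> (arcs P F)\<inverse>" using h_arcs by blast
    then show ?case using step.IH by (rule rtrancl_into_rtrancl[rotated])
  qed simp
  have "P = h ` S" using h unfolding bij_betw_def by blast
  then show ?thesis
    using assms(2) h_steps unfolding fds_connected_def by blast
qed

lemma linear_dendron_iso:
  assumes iso: "fds_iso P F S f" and "fds P F" and lin: "linear_dendron S f"
  shows "linear_dendron P F"
proof -
  have iso': "fds_iso S f P F" using iso \<open>fds P F\<close> by (rule fds_iso_sym)
  then have "fds_connected P F"
    using fds_iso_connected lin unfolding linear_dendron_def dendron_def by blast
  moreover have "\<exists>p\<in>P. F p = p"
  proof -
    obtain z where "z \<in> S" "f z = z" using lin unfolding linear_dendron_def dendron_def by blast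
    moreover obtain k where "bij_betw k S P" "\<forall>s\<in>S. k (f s) = F (k s)"
      using iso' unfolding fds_iso_def by blast
    ultimately show ?thesis using bij_betwE by metis
  qed
  moreover have "card {q \<in> P. F q = p} \<le> 1" if "p \<in> P" "F p \<noteq> p" for p
  proof -
    obtain h where h: "bij_betw h P S" and conj: "\<forall>x\<in>P. h (F x) = f (h x)"
      using iso unfolding fds_iso_def by blast
    have "F p \<in> P" using \<open>fds P F\<close> \<open>p \<in> P\<close> unfolding fds_def by blast
    then have "f (h p) \<noteq> h p"
      using that conj bij_betw_imp_inj_on[OF h] unfolding inj_on_def by metis
    then have "card {t \<in> S. f t = h p} \<le> 1"
      using lin bij_betwE[OF h] that(1) unfolding linear_dendron_def by blast
    moreover have "card {q \<in> P. F q = p} \<le> card {t \<in> S. f t = h p}"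
    proof (rule card_inj_on_le)
      show "inj_on h {q \<in> P. F q = p}" using bij_betw_imp_inj_on[OF h] by (rule inj_on_subset) blast
      show "h ` {q \<in> P. F q = p} \<subseteq> {t \<in> S. f t = h p}" using bij_betwE[OF h] conj by auto
      show "finite {t \<in> S. f t = h p}" using lin unfolding linear_dendron_def dendron_def fds_def by simp
    qed
    ultimately show ?thesis by simp
  qed
  ultimately show ?thesis
    using \<open>fds P F\<close> unfolding linear_dendron_def dendron_def by blast
qed

lemma fds_iso_constant:
  assumes "fds_iso P F S f" and "p0 \<in> P" and "\<forall>p\<in>P. F p = p0"
  shows "\<exists>z\<in>S. \<forall>s\<in>S. f s = z"
proof -
  obtain h where h: "bij_betw h P S" and conj: "\<forall>x\<in>P. h (F x) = f (h x)"
    using assms(1) unfolding fds_iso_def by blast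
  have "f s = h p0" if "s \<in> S" for s
    using that h conj assms(3) unfolding bij_betw_def by (metis imageE)
  then show ?thesis using h assms(2) unfolding bij_betw_def by blast
qed

lemma fds_prod: "fds SA fA \<Longrightarrow> fds SB fB \<Longrightarrow> fds (SA \<times> SB) (fds_prod_map fA fB)"
  by (auto simp: fds_def fds_prod_map_def)

lemma fds_prod_map_funpow: "(fds_prod_map fA fB ^^ m) (a, b) = ((fA ^^ m) a, (fB ^^ m) b)"
  by (induction m) (auto simp: fds_prod_map_def)

lemma fds_iso_prod_swap: "fds_iso (SB \<times> SA) (fds_prod_map fB fA) (SA \<times> SB) (fds_prod_map fA fB)"
  unfolding fds_iso_def
proof (intro exI conjI)
  show "bij_betw prod.swap (SB \<times> SA) (SA \<times> SB)"
    unfolding bij_betw_def by (simp add: product_swap)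
qed (auto simp: fds_prod_map_def)

lemma linear_dendron_prod_fst_constant:
  assumes "fds SA fA" "fds SB fB" and lin: "linear_dendron (SA \<times> SB) (fds_prod_map fA fB)"
    and "a0 \<in> SA" "fA a0 = a0" and "b0 \<in> SB" "fB b0 = b0" "SB \<noteq> {b0}" and "x \<in> SA"
  shows "fA x = a0"
proof (rule ccontr)
  let ?F = "fds_prod_map fA fB"
  assume "fA x \<noteq> a0"
  have dendron: "dendron (SA \<times> SB) ?F" using lin unfolding linear_dendron_def by blast
  have fixed: "?F (a0, b0) = (a0, b0)" using assms by (simp add: fds_prod_map_def)
  obtain b1 where b1: "b1 \<in> SB" "b1 \<noteq> b0"
    using \<open>b0 \<in> SB\<close> \<open>SB \<noteq> {b0}\<close> by blast
  obtain m where "(?F ^^ m) (a0, b1) = (a0, b0)"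
    using connected_reaches_fixpoint[of _ ?F "(a0, b0)" "(a0, b1)"] dendron fixed assms(4,6) b1
    unfolding dendron_def by auto
  then have "(fB ^^ m) b1 = b0" by (simp add: fds_prod_map_funpow)
  then obtain b' where b': "b' \<in> SB" "b' \<noteq> b0" "fB b' = b0"
    using reachable_has_proper_predecessor b1 \<open>fds SB fB\<close> unfolding fds_def by metis
  have "fA x \<in> SA" using \<open>fds SA fA\<close> \<open>x \<in> SA\<close> unfolding fds_def by blast
  then have "?F (fA x, b0) \<noteq> (fA x, b0)"
    using dendron_fixpoint_unique[OF dendron _ fixed, of "(fA x, b0)"] assms(4,6) \<open>fA x \<noteq> a0\<close>
    by auto
  moreover have "?F (x, b0) = (fA x, b0)" "?F (x, b') = (fA x, b0)"
    using \<open>fB b0 = b0\<close> b' by (simp_all add: fds_prod_map_def)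
  ultimately have "(x, b0) = (x, b')"
    using linear_dendron_predecessor_unique[OF lin] \<open>fA x \<in> SA\<close> \<open>x \<in> SA\<close>
      \<open>b0 \<in> SB\<close> b'(1)
    by blast
  then show False using b'(2) by simp
qed

lemma linear_dendron_prod_constant:
  assumes "fds SA fA" "fds SB fB" "2 \<le> card SA" "2 \<le> card SB"
    and lin: "linear_dendron (SA \<times> SB) (fds_prod_map fA fB)"
    and "p0 \<in> SA \<times> SB" "fds_prod_map fA fB p0 = p0"
  shows "\<forall>p\<in>SA \<times> SB. fds_prod_map fA fB p = p0"
proof -
  obtain a0 b0 where p0: "p0 = (a0, b0)" "a0 \<in> SA" "b0 \<in> SB" "fA a0 = a0" "fB b0 = b0"
    using assms(6,7) by (cases p0) (auto simp: fds_prod_map_def)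
  have "SA \<noteq> {a0}" "SB \<noteq> {b0}" using assms(3,4) by auto
  have "linear_dendron (SB \<times> SA) (fds_prod_map fB fA)"
    using linear_dendron_iso[OF fds_iso_prod_swap fds_prod[OF assms(2,1)] lin] .
  from linear_dendron_prod_fst_constant[OF assms(2,1) this p0(3,5,2,4) \<open>SA \<noteq> {a0}\<close>]
  have "fB y = b0" if "y \<in> SB" for y
    using that .
  moreover from linear_dendron_prod_fst_constant[OF assms(1,2) lin p0(2,4,3,5) \<open>SB \<noteq> {b0}\<close>]
  have "fA x = a0" if "x \<in> SA" for x
    using that .
  ultimately show ?thesis using p0(1) by (auto simp: fds_prod_map_def)
qed

lemma proper_factor_ge_2:
  fixes a b n :: nat
  assumes "n = a * b" "a < n" "b < n"
  shows "2 \<le> a"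
proof -
  have "a \<noteq> 0" "a \<noteq> 1" using assms by auto
  then show ?thesis by linarith
qed

lemma composite_iff_factors: "composite n \<longleftrightarrow> (\<exists>a b. n = a * b \<and> a < n \<and> b < n)"
proof
  assume "composite n"
  then obtain a where "a dvd n" "a \<noteq> 1" "a \<noteq> n" "1 < n"
    unfolding composite_def prime_nat_iff by blast
  moreover from this obtain b where "n = a * b" by blast
  moreover have "b \<noteq> n"
  proof
    assume "b = n"
    with \<open>n = a * b\<close> \<open>1 < n\<close> have "a = 1" by simp
    with \<open>a \<noteq> 1\<close> show False ..
  qed
  moreover have "b dvd n" using \<open>n = a * b\<close> by simp
  then have "a \<le> n" "b \<le> n"
    using dvd_imp_le[OF \<open>a dvd n\<close>] dvd_imp_le[of b n] \<open>1 < n\<close> by simp_all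
  ultimately have "a < n" "b < n" by linarith+
  with \<open>n = a * b\<close> show "\<exists>a b. n = a * b \<and> a < n \<and> b < n" by blast
next
  assume "\<exists>a b. n = a * b \<and> a < n \<and> b < n"
  then obtain a b where ab: "n = a * b" "a < n" "b < n" by blast
  have "2 \<le> a" using proper_factor_ge_2 ab .
  then have "1 < n" "a \<noteq> 1" using ab(2) by linarith+
  moreover have "a dvd n" using ab(1) by simp
  ultimately show "composite n"
    unfolding composite_def prime_nat_iff using ab(2) by blast
qed

lemma reducibleE:
  assumes "reducible S f"
  obtains SA SB :: "nat set" and fA fB where "fds SA fA" "fds SB fB"
    "fds_iso (SA \<times> SB) (fds_prod_map fA fB) S f"
    "card S = card SA * card SB" "card SA < card S" "card SB < card S"
proof -
  obtain SA SB :: "nat set" and fA fB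
    where factors: "fds SA fA" "fds SB fB" "card SA < card S" "card SB < card S"
      and iso: "fds_iso (SA \<times> SB) (fds_prod_map fA fB) S f"
    using assms unfolding reducible_def by blast
  from iso obtain h where "bij_betw h (SA \<times> SB) S" unfolding fds_iso_def by blast
  then have "card (SA \<times> SB) = card S" by (rule bij_betw_same_card)
  then have "card S = card SA * card SB" by (simp add: card_cartesian_product)
  with factors iso show ?thesis using that by blast
qed

lemma reducible_imp_composite:
  assumes "reducible S f"
  shows "composite (card S)"
proof -
  obtain SA SB :: "nat set"
    where "card S = card SA * card SB" "card SA < card S" "card SB < card S"
    using assms by (rule reducibleE)
  then show ?thesis unfolding composite_iff_factors by blast
qed

lemma reducible_linear_dendron_is_star:
  assumes lin: "linear_dendron S f" and "reducible S f"
  shows "is_star S f"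
proof -
  obtain SA SB :: "nat set" and fA fB where fds: "fds SA fA" "fds SB fB"
    and iso: "fds_iso (SA \<times> SB) (fds_prod_map fA fB) S f"
    and card: "card S = card SA * card SB" "card SA < card S" "card SB < card S"
    using \<open>reducible S f\<close> by (rule reducibleE)
  have "2 \<le> card SA" "2 \<le> card SB"
    using proper_factor_ge_2 card proper_factor_ge_2[of _ "card SB" "card SA"] by (auto simp: mult.commute)
  moreover have lin_prod: "linear_dendron (SA \<times> SB) (fds_prod_map fA fB)"
    using linear_dendron_iso[OF iso fds_prod[OF fds] lin] .
  moreover obtain p0 where "p0 \<in> SA \<times> SB" "fds_prod_map fA fB p0 = p0"
    using lin_prod unfolding linear_dendron_def dendron_def by blast
  ultimately have "\<forall>p\<in>SA \<times> SB. fds_prod_map fA fB p = p0"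
    using linear_dendron_prod_constant fds by blast
  then obtain z where "z \<in> S" "\<forall>s\<in>S. f s = z"
    using fds_iso_constant[OF iso \<open>p0 \<in> SA \<times> SB\<close>] by blast
  then show ?thesis using linear_dendron_is_star_iff[OF lin] by blast
qed

lemma constant_map_reducible:
  assumes "finite S" "z \<in> S" "\<forall>s\<in>S. f s = z"
    and "card S = a * b" "a < card S" "b < card S"
  shows "reducible S f"
proof -
  define SA SB where "SA = {..<a}" and "SB = {..<b}"
  have "2 \<le> a" using proper_factor_ge_2 assms(4-6) .
  moreover have "2 \<le> b" using proper_factor_ge_2[of "card S" b a] assms(4-6) by (simp add: mult.commute)
  ultimately have origin: "(0, 0) \<in> SA \<times> SB" by (simp add: SA_def SB_def)
  have "fds SA (\<lambda>_. 0)" "fds SB (\<lambda>_. 0)" "card SA < card S" "card SB < card S"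
    using origin assms(5,6) by (auto simp: fds_def SA_def SB_def)
  moreover have "fds_iso (SA \<times> SB) (fds_prod_map (\<lambda>_. 0) (\<lambda>_. 0)) S f"
  proof -
    have "finite (SA \<times> SB)" "card (SA \<times> SB) = card S"
      using assms(4) by (simp_all add: SA_def SB_def card_cartesian_product)
    then obtain g where g: "bij_betw g (SA \<times> SB) S"
      using finite_same_card_bij assms(1) by blast
    then obtain q where q: "q \<in> SA \<times> SB" "g q = z"
      using \<open>z \<in> S\<close> unfolding bij_betw_def by blast
    \<comment> \<open>Any bijection works once it is composed with a transposition sending (0, 0) to z.\<close>
    define h where "h = Fun.swap (0, 0) q g"
    have h: "bij_betw h (SA \<times> SB) S"
      unfolding h_def bij_betw_swap_iff[OF origin q(1)] by (rule g)
    have "h (0, 0) = z" using q(2) by (simp add: h_def)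
    then have "h (fds_prod_map (\<lambda>_. 0) (\<lambda>_. 0) p) = f (h p)" if "p \<in> SA \<times> SB" for p
      using bij_betwE[OF h] that assms(3) by (auto simp: fds_prod_map_def split: prod.splits)
    with h show ?thesis unfolding fds_iso_def by blast
  qed
  ultimately show ?thesis unfolding reducible_def by blast
qed

theorem mainTheorem7:
  fixes S :: "'a set" and f :: "'a \<Rightarrow> 'a"
  assumes "linear_dendron S f"
  shows "reducible S f \<longleftrightarrow> is_star S f \<and> composite (card S)"
proof
  assume "reducible S f"
  then show "is_star S f \<and> composite (card S)"
    using reducible_linear_dendron_is_star[OF assms] reducible_imp_composite by simp
next
  assume star: "is_star S f \<and> composite (card S)"
  obtain z where z: "z \<in> S" "f z = z"
    using assms unfolding linear_dendron_def dendron_def by blast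
  have "finite S" using assms unfolding linear_dendron_def dendron_def fds_def by blast
  moreover have "\<forall>s\<in>S. f s = z" using star linear_dendron_is_star_iff[OF assms z] by blast
  moreover obtain a b where "card S = a * b" "a < card S" "b < card S"
    using star unfolding composite_iff_factors by blast
  ultimately show "reducible S f" by (rule constant_map_reducible[OF _ z(1)])
qed

end
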